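(* Let $\beta$, $\Omega$, $\mathcal H_\eta$ and $a_{s\beta,\eta}$ be as in the context. There is a constant $C_\beta$ such that for all $\varepsilon\in(0,1)$, $\eta\in[-\pi,\pi]$ and $U\in\mathcal H_\eta$, $$\big|a_{\varepsilon\beta,\eta}[U]-a_{0,\eta}[U]\big|\le C_\beta\,\varepsilon\,\|\nabla U\|_\Omega^2.$$
   Context: $\omega\subset\mathbb{R}^2$ is a bounded domain with piecewise $C^2$ boundary without cusps; $\gamma_D\subset\partial\omega$ is a finite union of arcs of positive measure. $\partial_\varphi=x_1\partial_2-x_2\partial_1$. $\beta\in C^2(\mathbb{R})$ has positive $1$-periodic derivative $\dot\beta$. $\Omega=\omega\times(0,1)$; for $\eta\in[-\pi,\pi]$, $\mathcal H_\eta$ is the space of $U\in H^1(\Omega)$ vanishing on $\gamma_D\times(0,1)$ with $U(x',1)=e^{i\eta}U(x',0)$. For $s\in\mathbb{R}$, $a_{s\beta,\eta}[U]=\int_\Omega\big(|\nabla'U|^2+|(\partial_3+s\dot\beta(x_3)\partial_\varphi)U|^2\big)\mathrm{d}x$, $U\in\mathcal H_\eta$; $\|\cdot\|_\Omega$ is the $L^2(\Omega)$ norm. *)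

theory Defs
  imports "HOL-Analysis.Analysis"
begin

text \<open>Points of the plane are pairs (x1,x2); points of R^3 are ((x1,x2),x3).\<close>
type_synonym pt2 = "real \<times> real"
type_synonym pt3 = "(real \<times> real) \<times> real"

definition C2_regular_arc :: "(real \<Rightarrow> pt2) \<Rightarrow> bool" where
  "C2_regular_arc g \<longleftrightarrow> arc g \<and>
     (\<exists>g1 g2. (\<forall>t. (g has_vector_derivative g1 t) (at t)) \<and>
              (\<forall>t. (g1 has_vector_derivative g2 t) (at t)) \<and>
              continuous_on UNIV g2 \<and> (\<forall>t\<in>{0..1}. g1 t \<noteq> 0))"

text \<open>Arc ends: (k, True) is the start of arc k, (k, False) its finish.\<close>
definition arc_end_pt :: "(nat \<Rightarrow> real \<Rightarrow> pt2) \<Rightarrow> nat \<times> bool \<Rightarrow> pt2" where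
  "arc_end_pt g e = (if snd e then g (fst e) 0 else g (fst e) 1)"

text \<open>Outgoing tangent direction at an arc end.\<close>
definition arc_end_tangent :: "(nat \<Rightarrow> real \<Rightarrow> pt2) \<Rightarrow> nat \<times> bool \<Rightarrow> pt2" where
  "arc_end_tangent g e = (if snd e then vector_derivative (g (fst e)) (at 0)
                          else - vector_derivative (g (fst e)) (at 1))"

definition pw_C2_boundary_no_cusps :: "pt2 set \<Rightarrow> bool" where
  "pw_C2_boundary_no_cusps \<omega> \<longleftrightarrow>
     interior (closure \<omega>) = \<omega> \<and>
     (\<exists>n::nat. \<exists>g :: nat \<Rightarrow> real \<Rightarrow> pt2. 0 < n \<and>
        (\<forall>k<n. C2_regular_arc (g k)) \<and>
        frontier \<omega> = (\<Union>k<n. path_image (g k)) \<and>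
        (\<forall>k<n. \<forall>l<n. k \<noteq> l \<longrightarrow>
            path_image (g k) \<inter> path_image (g l) \<subseteq> {pathstart (g k), pathfinish (g k)}) \<and>
        (\<forall>e. fst e < n \<longrightarrow>
            (\<exists>!e'. fst e' < n \<and> e' \<noteq> e \<and> arc_end_pt g e' = arc_end_pt g e)) \<and>
        (\<forall>e e'. fst e < n \<and> fst e' < n \<and> e \<noteq> e' \<and> arc_end_pt g e' = arc_end_pt g e \<longrightarrow>
            \<not> (\<exists>c>0. arc_end_tangent g e' = c *\<^sub>R arc_end_tangent g e)))"

definition bounded_domain :: "pt2 set \<Rightarrow> bool" where
  "bounded_domain \<omega> \<longleftrightarrow> open \<omega> \<and> connected \<omega> \<and> bounded \<omega> \<and> \<omega> \<noteq> {}"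

text \<open>gamma_D: finite (nonempty) union of arcs of the boundary (injective continuous
  curves, hence of positive length/measure).\<close>
definition dirichlet_part :: "pt2 set \<Rightarrow> pt2 set \<Rightarrow> bool" where
  "dirichlet_part \<omega> \<gamma>D \<longleftrightarrow>
     (\<exists>m::nat. \<exists>h :: nat \<Rightarrow> real \<Rightarrow> pt2. 0 < m \<and>
        (\<forall>j<m. arc (h j) \<and> path_image (h j) \<subseteq> frontier \<omega>) \<and>
        \<gamma>D = (\<Union>j<m. path_image (h j)))"

definition admissible_beta :: "(real \<Rightarrow> real) \<Rightarrow> (real \<Rightarrow> real) \<Rightarrow> bool" where
  "admissible_beta \<beta> b1 \<longleftrightarrow>
     (\<exists>b2. (\<forall>t. (\<beta> has_real_derivative b1 t) (at t)) \<and>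
           (\<forall>t. (b1 has_real_derivative b2 t) (at t)) \<and> continuous_on UNIV b2 \<and>
           (\<forall>t. 0 < b1 t) \<and> (\<forall>t. b1 (t + 1) = b1 t))"

definition Cyl :: "pt2 set \<Rightarrow> pt3 set" where
  "Cyl \<omega> = {x. fst x \<in> \<omega> \<and> 0 < snd x \<and> snd x < 1}"

definition L2_on :: "pt3 set \<Rightarrow> (pt3 \<Rightarrow> complex) \<Rightarrow> bool" where
  "L2_on \<Omega> f \<longleftrightarrow> set_borel_measurable lebesgue \<Omega> f \<and>
                  set_integrable lebesgue \<Omega> (\<lambda>x. (cmod (f x))\<^sup>2)"

definition test_fun :: "pt3 set \<Rightarrow> (pt3 \<Rightarrow> real) \<Rightarrow> (pt3 \<Rightarrow> real) \<Rightarrow> (pt3 \<Rightarrow> real)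
                          \<Rightarrow> (pt3 \<Rightarrow> real) \<Rightarrow> bool" where
  "test_fun \<Omega> \<phi> \<phi>1 \<phi>2 \<phi>3 \<longleftrightarrow>
     (\<forall>x. (\<phi> has_derivative
            (\<lambda>h. fst (fst h) * \<phi>1 x + snd (fst h) * \<phi>2 x + snd h * \<phi>3 x)) (at x)) \<and>
     continuous_on UNIV \<phi>1 \<and> continuous_on UNIV \<phi>2 \<and> continuous_on UNIV \<phi>3 \<and>
     compact (closure {x. \<phi> x \<noteq> 0}) \<and> closure {x. \<phi> x \<noteq> 0} \<subseteq> \<Omega>"

definition weak_grad :: "pt3 set \<Rightarrow> (pt3 \<Rightarrow> complex) \<Rightarrow> (pt3 \<Rightarrow> complex) \<Rightarrow> (pt3 \<Rightarrow> complex)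
                           \<Rightarrow> (pt3 \<Rightarrow> complex) \<Rightarrow> bool" where
  "weak_grad \<Omega> U G1 G2 G3 \<longleftrightarrow>
     (\<forall>\<phi> \<phi>1 \<phi>2 \<phi>3. test_fun \<Omega> \<phi> \<phi>1 \<phi>2 \<phi>3 \<longrightarrow>
        (LINT x:\<Omega>|lebesgue. U x * of_real (\<phi>1 x)) = - (LINT x:\<Omega>|lebesgue. G1 x * of_real (\<phi> x)) \<and>
        (LINT x:\<Omega>|lebesgue. U x * of_real (\<phi>2 x)) = - (LINT x:\<Omega>|lebesgue. G2 x * of_real (\<phi> x)) \<and>
        (LINT x:\<Omega>|lebesgue. U x * of_real (\<phi>3 x)) = - (LINT x:\<Omega>|lebesgue. G3 x * of_real (\<phi> x)))"

definition H1_on :: "pt3 set \<Rightarrow> (pt3 \<Rightarrow> complex) \<Rightarrow> (pt3 \<Rightarrow> complex) \<Rightarrow> (pt3 \<Rightarrow> complex)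
                       \<Rightarrow> (pt3 \<Rightarrow> complex) \<Rightarrow> bool" where
  "H1_on \<Omega> U G1 G2 G3 \<longleftrightarrow> L2_on \<Omega> U \<and> L2_on \<Omega> G1 \<and> L2_on \<Omega> G2 \<and> L2_on \<Omega> G3 \<and>
                            weak_grad \<Omega> U G1 G2 G3"

definition C1_grad :: "(pt3 \<Rightarrow> complex) \<Rightarrow> (pt3 \<Rightarrow> complex) \<Rightarrow> (pt3 \<Rightarrow> complex)
                         \<Rightarrow> (pt3 \<Rightarrow> complex) \<Rightarrow> bool" where
  "C1_grad V V1 V2 V3 \<longleftrightarrow>
     (\<forall>x. (V has_derivative (\<lambda>h. of_real (fst (fst h)) * V1 x + of_real (snd (fst h)) * V2 x
                                + of_real (snd h) * V3 x)) (at x)) \<and>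
     continuous_on UNIV V1 \<and> continuous_on UNIV V2 \<and> continuous_on UNIV V3"

text \<open>H_eta: H^1(Omega) functions with zero trace on gamma_D x (0,1) and
  U(x',1) = e^{i eta} U(x',0), expressed as the H^1-closure of C^1 functions satisfying
  these conditions pointwise.\<close>
definition H_eta :: "pt2 set \<Rightarrow> pt2 set \<Rightarrow> real \<Rightarrow> (pt3 \<Rightarrow> complex) \<Rightarrow> (pt3 \<Rightarrow> complex)
                       \<Rightarrow> (pt3 \<Rightarrow> complex) \<Rightarrow> (pt3 \<Rightarrow> complex) \<Rightarrow> bool" where
  "H_eta \<omega> \<gamma>D \<eta> U G1 G2 G3 \<longleftrightarrow> H1_on (Cyl \<omega>) U G1 G2 G3 \<and>
     (\<exists>V V1 V2 V3 :: nat \<Rightarrow> pt3 \<Rightarrow> complex.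
        (\<forall>n. C1_grad (V n) (V1 n) (V2 n) (V3 n) \<and>
             (\<forall>x'\<in>\<gamma>D. \<forall>t\<in>{0..1}. V n (x', t) = 0) \<and>
             (\<forall>x'\<in>closure \<omega>. V n (x', 1) = cis \<eta> * V n (x', 0))) \<and>
        (\<lambda>n. LINT x:Cyl \<omega>|lebesgue. (cmod (U x - V n x))\<^sup>2 + (cmod (G1 x - V1 n x))\<^sup>2
                + (cmod (G2 x - V2 n x))\<^sup>2 + (cmod (G3 x - V3 n x))\<^sup>2) \<longlonglongrightarrow> 0)"

text \<open>a_{s beta, eta}[U], with nabla U = (G1,G2,G3) and d_phi = x1 d_2 - x2 d_1.\<close>
definition a_form :: "pt2 set \<Rightarrow> (real \<Rightarrow> real) \<Rightarrow> real \<Rightarrow> (pt3 \<Rightarrow> complex) \<Rightarrow> (pt3 \<Rightarrow> complex)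
                        \<Rightarrow> (pt3 \<Rightarrow> complex) \<Rightarrow> real" where
  "a_form \<omega> b1 s G1 G2 G3 =
     (LINT x:Cyl \<omega>|lebesgue. (cmod (G1 x))\<^sup>2 + (cmod (G2 x))\<^sup>2 +
        (cmod (G3 x + of_real (s * b1 (snd x)) *
               (of_real (fst (fst x)) * G2 x - of_real (snd (fst x)) * G1 x)))\<^sup>2)"

definition grad_norm_sq :: "pt2 set \<Rightarrow> (pt3 \<Rightarrow> complex) \<Rightarrow> (pt3 \<Rightarrow> complex)
                             \<Rightarrow> (pt3 \<Rightarrow> complex) \<Rightarrow> real" where
  "grad_norm_sq \<omega> G1 G2 G3 =
     (LINT x:Cyl \<omega>|lebesgue. (cmod (G1 x))\<^sup>2 + (cmod (G2 x))\<^sup>2 + (cmod (G3 x))\<^sup>2)"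

end

theory Submission
  imports Defs
begin

text \<open>The twist only enters through the third component
  \<open>(\<partial>\<^sub>3 + s \<beta>'(x\<^sub>3) \<partial>\<^sub>\<phi>) U\<close>, and on the bounded cylinder the coefficient
  \<open>x\<^sub>1, x\<^sub>2\<close> of \<open>\<partial>\<^sub>\<phi>\<close> and the weight \<open>\<beta>'\<close> on \<open>[0, 1]\<close> are bounded. Expanding
  \<open>|a + w|\<^sup>2 - |a|\<^sup>2 = (|a + w| - |a|)(|a + w| + |a|)\<close> with \<open>|w| = O(s |\<nabla>U|)\<close> bounds the
  difference of the integrands pointwise by \<open>O(s) |\<nabla>U|\<^sup>2\<close>; integrating gives the claim.\<close>

lemma norm_add_power2_diff_le:
  fixes z w :: "'a::real_normed_vector"
  shows "\<bar>(norm (z + w))\<^sup>2 - (norm z)\<^sup>2\<bar> \<le> 2 * norm z * norm w + (norm w)\<^sup>2"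
proof -
  have diff: "\<bar>norm (z + w) - norm z\<bar> \<le> norm w"
    using norm_triangle_ineq3[of "z + w" z] by simp
  have sum: "\<bar>norm (z + w) + norm z\<bar> \<le> 2 * norm z + norm w"
    using norm_triangle_ineq[of z w] by simp
  have "(norm (z + w))\<^sup>2 - (norm z)\<^sup>2 = (norm (z + w) - norm z) * (norm (z + w) + norm z)"
    by (simp add: power2_eq_square algebra_simps)
  then have "\<bar>(norm (z + w))\<^sup>2 - (norm z)\<^sup>2\<bar> = \<bar>norm (z + w) - norm z\<bar> * \<bar>norm (z + w) + norm z\<bar>"
    by (simp add: abs_mult)
  also have "\<dots> \<le> norm w * (2 * norm z + norm w)"
    using diff sum by (intro mult_mono) auto
  finally show ?thesis
    by (simp add: power2_eq_square algebra_simps)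
qed

lemma norm_add_power2_diff_le_sum_squares:
  fixes z w :: "'a::real_normed_vector" and a b q :: real
  assumes w: "norm w \<le> q * (a + b)" and "0 \<le> a" "0 \<le> b" "0 \<le> q"
  shows "\<bar>(norm (z + w))\<^sup>2 - (norm z)\<^sup>2\<bar> \<le> 2 * (q + q\<^sup>2) * (a\<^sup>2 + b\<^sup>2 + (norm z)\<^sup>2)"
proof -
  define S where "S = a\<^sup>2 + b\<^sup>2 + (norm z)\<^sup>2"
  have ab: "(a + b)\<^sup>2 \<le> 2 * (a\<^sup>2 + b\<^sup>2)"
    using sum_squares_bound[of a b] by (simp add: power2_eq_square algebra_simps)
  have "2 * norm z * (a + b) \<le> (norm z)\<^sup>2 + (a + b)\<^sup>2"
    using sum_squares_bound[of "norm z" "a + b"] by (simp add: power2_eq_square)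
  then have cross: "2 * norm z * (a + b) \<le> 2 * S"
    using ab zero_le_power2[of "norm z"] unfolding S_def by (smt (verit))
  have "2 * norm z * norm w \<le> q * (2 * norm z * (a + b))"
    using mult_left_mono[OF w, of "2 * norm z"] by (simp add: algebra_simps)
  also have "\<dots> \<le> q * (2 * S)"
    using cross assms(4) by (rule mult_left_mono)
  finally have linear: "2 * norm z * norm w \<le> 2 * q * S" by simp
  have "(a + b)\<^sup>2 \<le> 2 * S"
    using ab zero_le_power2[of "norm z"] unfolding S_def by (smt (verit))
  then have "(norm w)\<^sup>2 \<le> q\<^sup>2 * (2 * S)"
    using power_mono[OF w] norm_ge_zero[of w]
    by (smt (verit, best) mult_left_mono power_mult_distrib zero_le_power2)
  then have quadratic: "(norm w)\<^sup>2 \<le> 2 * q\<^sup>2 * S" by simp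
  show ?thesis
    using norm_add_power2_diff_le[of z w] linear quadratic unfolding S_def
    by (simp add: algebra_simps)
qed

lemma norm_of_real_mult_diff_le:
  fixes x y :: "'a::real_normed_algebra_1" and a b R :: real
  assumes "\<bar>a\<bar> \<le> R" "\<bar>b\<bar> \<le> R"
  shows "norm (of_real a * y - of_real b * x) \<le> R * (norm x + norm y)"
proof -
  have "norm (of_real a * y - of_real b * x) \<le> \<bar>a\<bar> * norm y + \<bar>b\<bar> * norm x"
    using norm_triangle_ineq4[of "a *\<^sub>R y" "b *\<^sub>R x"] by (simp flip: scaleR_conv_of_real)
  also have "\<dots> \<le> R * norm y + R * norm x"
    using assms by (intro add_mono mult_right_mono) auto
  finally show ?thesis by (simp add: algebra_simps)
qed

lemma set_integral_abs_diff_le: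
  fixes f g h :: "'a \<Rightarrow> real"
  assumes g: "set_integrable M A g" and h: "set_integrable M A h"
    and f: "set_borel_measurable M A f"
    and bound: "\<And>x. x \<in> A \<Longrightarrow> \<bar>f x - g x\<bar> \<le> h x"
  shows "\<bar>(LINT x:A|M. f x) - (LINT x:A|M. g x)\<bar> \<le> (LINT x:A|M. h x)"
proof -
  have "set_integrable M A (\<lambda>x. \<bar>g x\<bar> + h x)"
    using g h by (intro set_integral_add set_integrable_abs)
  then have f_int: "set_integrable M A f"
    by (rule set_integrable_bound[OF _ f]) (auto dest!: bound)
  have "(LINT x:A|M. f x - g x) \<le> (LINT x:A|M. h x)"
    using f_int g h bound by (intro set_integral_mono) (auto simp: abs_le_iff)
  moreover have "(LINT x:A|M. g x - f x) \<le> (LINT x:A|M. h x)"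
    using f_int g h bound by (intro set_integral_mono) (auto simp: abs_le_iff)
  ultimately show ?thesis
    using f_int g by (simp add: set_integral_diff abs_le_iff)
qed

definition twisted_energy_density ::
    "(real \<Rightarrow> real) \<Rightarrow> real \<Rightarrow> (pt3 \<Rightarrow> complex) \<Rightarrow> (pt3 \<Rightarrow> complex) \<Rightarrow> (pt3 \<Rightarrow> complex)
      \<Rightarrow> pt3 \<Rightarrow> real" where
  "twisted_energy_density b1 s G1 G2 G3 x = (cmod (G1 x))\<^sup>2 + (cmod (G2 x))\<^sup>2 +
     (cmod (G3 x + of_real (s * b1 (snd x)) *
        (of_real (fst (fst x)) * G2 x - of_real (snd (fst x)) * G1 x)))\<^sup>2"

lemma a_form_eq_integral_twisted_energy_density:
  "a_form \<omega> b1 s G1 G2 G3 = (LINT x:Cyl \<omega>|lebesgue. twisted_energy_density b1 s G1 G2 G3 x)"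
  by (simp add: a_form_def twisted_energy_density_def)

lemma grad_norm_sq_eq_a_form_0: "grad_norm_sq \<omega> G1 G2 G3 = a_form \<omega> b1 0 G1 G2 G3"
  by (simp add: a_form_def grad_norm_sq_def)

lemma twisted_energy_density_0:
  "twisted_energy_density b1 0 G1 G2 G3 x = (cmod (G1 x))\<^sup>2 + (cmod (G2 x))\<^sup>2 + (cmod (G3 x))\<^sup>2"
  by (simp add: twisted_energy_density_def)

lemma borel_measurable_twisted_energy_density:
  assumes b1: "continuous_on UNIV b1"
    and [measurable]: "G1 \<in> borel_measurable lebesgue" "G2 \<in> borel_measurable lebesgue"
      "G3 \<in> borel_measurable lebesgue"
  shows "twisted_energy_density b1 s G1 G2 G3 \<in> borel_measurable lebesgue"
proof -
  have continuous_measurable: "f \<in> borel_measurable lebesgue" if "continuous_on UNIV f"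
    for f :: "pt3 \<Rightarrow> complex"
    using continuous_imp_measurable_on_sets_lebesgue[OF that] by (simp add: lebesgue_on_UNIV_eq)
  have [measurable]: "(\<lambda>x::pt3. of_real (s * b1 (snd x)) :: complex) \<in> borel_measurable lebesgue"
    by (rule continuous_measurable, intro continuous_intros continuous_on_compose2[OF b1]) auto
  have [measurable]: "(\<lambda>x::pt3. of_real (fst (fst x)) :: complex) \<in> borel_measurable lebesgue"
    "(\<lambda>x::pt3. of_real (snd (fst x)) :: complex) \<in> borel_measurable lebesgue"
    by (rule continuous_measurable, intro continuous_intros)+
  show ?thesis
    unfolding twisted_energy_density_def[abs_def] by measurable
qed

lemma set_borel_measurable_twisted_energy_density:
  assumes "continuous_on UNIV b1" and "H1_on \<Omega> U G1 G2 G3"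
  shows "set_borel_measurable lebesgue \<Omega> (twisted_energy_density b1 s G1 G2 G3)"
proof -
  have "(\<lambda>x. indicator \<Omega> x *\<^sub>R twisted_energy_density b1 s G1 G2 G3 x) =
      twisted_energy_density b1 s (\<lambda>x. indicator \<Omega> x *\<^sub>R G1 x) (\<lambda>x. indicator \<Omega> x *\<^sub>R G2 x)
        (\<lambda>x. indicator \<Omega> x *\<^sub>R G3 x)"
    by (auto simp: twisted_energy_density_def indicator_def)
  with assms show ?thesis
    unfolding H1_on_def L2_on_def set_borel_measurable_def
    by (simp add: borel_measurable_twisted_energy_density)
qed

lemma set_integrable_twisted_energy_density_0:
  assumes "H1_on \<Omega> U G1 G2 G3"
  shows "set_integrable lebesgue \<Omega> (twisted_energy_density b1 0 G1 G2 G3)"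
  using assms unfolding H1_on_def L2_on_def twisted_energy_density_0
  by (intro set_integral_add) auto

lemma twisted_energy_density_deviation_le:
  assumes "\<bar>fst (fst x)\<bar> \<le> R" "\<bar>snd (fst x)\<bar> \<le> R"
    and "0 \<le> b1 (snd x)" "b1 (snd x) \<le> M" and "0 \<le> s" "s \<le> 1"
  shows "\<bar>twisted_energy_density b1 s G1 G2 G3 x - twisted_energy_density b1 0 G1 G2 G3 x\<bar>
    \<le> s * (2 * (M * R + (M * R)\<^sup>2)) * twisted_energy_density b1 0 G1 G2 G3 x"
proof -
  define v where "v = of_real (fst (fst x)) * G2 x - of_real (snd (fst x)) * G1 x"
  define q where "q = s * M * R"
  have R: "0 \<le> R" and M: "0 \<le> M"
    using assms(1,3,4) by linarith+
  have "norm (of_real (s * b1 (snd x)) * v) = s * b1 (snd x) * norm v"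
    using assms(3,5) by (simp add: norm_mult)
  also have "\<dots> \<le> (s * M) * (R * (cmod (G1 x) + cmod (G2 x)))"
    unfolding v_def using assms M
    by (intro mult_mono norm_of_real_mult_diff_le mult_left_mono) auto
  finally have "norm (of_real (s * b1 (snd x)) * v) \<le> q * (cmod (G1 x) + cmod (G2 x))"
    by (simp add: q_def mult.assoc)
  then have "\<bar>twisted_energy_density b1 s G1 G2 G3 x - twisted_energy_density b1 0 G1 G2 G3 x\<bar>
      \<le> 2 * (q + q\<^sup>2) * twisted_energy_density b1 0 G1 G2 G3 x"
    using norm_add_power2_diff_le_sum_squares[of _ q "cmod (G1 x)" "cmod (G2 x)" "G3 x"]
      assms R M
    by (simp add: twisted_energy_density_def twisted_energy_density_0 v_def q_def)
  also have "\<dots> \<le> s * (2 * (M * R + (M * R)\<^sup>2)) * twisted_energy_density b1 0 G1 G2 G3 x"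
  proof (rule mult_right_mono)
    have "s * s \<le> s"
      using assms(5,6) by (intro mult_left_le_one_le)
    from mult_right_mono[OF this zero_le_power2[of "M * R"]]
    show "2 * (q + q\<^sup>2) \<le> s * (2 * (M * R + (M * R)\<^sup>2))"
      by (simp add: q_def power2_eq_square algebra_simps)
  qed (simp add: twisted_energy_density_def)
  finally show ?thesis .
qed

theorem lemma1:
  fixes \<omega> \<gamma>D :: "pt2 set" and \<beta> b1 :: "real \<Rightarrow> real"
  assumes "bounded_domain \<omega>" and "pw_C2_boundary_no_cusps \<omega>"
    and "dirichlet_part \<omega> \<gamma>D"
    and "admissible_beta \<beta> b1"
  shows "\<exists>C::real. \<forall>\<epsilon> \<eta> U G1 G2 G3. 0 < \<epsilon> \<and> \<epsilon> < 1 \<and> -pi \<le> \<eta> \<and> \<eta> \<le> pi \<and>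
           H_eta \<omega> \<gamma>D \<eta> U G1 G2 G3 \<longrightarrow>
           \<bar>a_form \<omega> b1 \<epsilon> G1 G2 G3 - a_form \<omega> b1 0 G1 G2 G3\<bar>
             \<le> C * \<epsilon> * grad_norm_sq \<omega> G1 G2 G3"
proof -
  obtain R where R: "\<And>x. x \<in> \<omega> \<Longrightarrow> norm x \<le> R"
    using assms(1) bounded_iff unfolding bounded_domain_def by blast
  obtain b2 where "\<And>t. (b1 has_real_derivative b2 t) (at t)" and b1_pos: "\<And>t. 0 < b1 t"
    using assms(4) unfolding admissible_beta_def by blast
  then have b1_cont: "continuous_on UNIV b1"
    by (meson DERIV_isCont continuous_at_imp_continuous_on)
  have "bounded (b1 ` {0..1})"
    by (intro compact_imp_bounded compact_continuous_image continuous_on_subset[OF b1_cont]) auto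
  then obtain M where M: "\<And>t. t \<in> {0..1} \<Longrightarrow> b1 t \<le> M"
    unfolding bounded_real by (meson abs_le_D1 image_eqI)
  let ?K = "2 * (M * R + (M * R)\<^sup>2)"
  have deviation: "\<bar>twisted_energy_density b1 \<epsilon> G1 G2 G3 x - twisted_energy_density b1 0 G1 G2 G3 x\<bar>
      \<le> \<epsilon> * ?K * twisted_energy_density b1 0 G1 G2 G3 x"
    if "x \<in> Cyl \<omega>" "0 < \<epsilon>" "\<epsilon> < 1" for \<epsilon> x G1 G2 G3
    using that R[of "fst x"] norm_fst_le[of "fst (fst x)" "snd (fst x)"]
      norm_snd_le[of "snd (fst x)" "fst (fst x)"] b1_pos[of "snd x"] M[of "snd x"]
    by (intro twisted_energy_density_deviation_le) (auto simp: Cyl_def)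
  show ?thesis
  proof (intro exI[of _ ?K] allI impI, elim conjE)
    fix \<epsilon> \<eta> :: real and U G1 G2 G3
    assume "0 < \<epsilon>" "\<epsilon> < 1" "H_eta \<omega> \<gamma>D \<eta> U G1 G2 G3"
    then have H1: "H1_on (Cyl \<omega>) U G1 G2 G3" by (simp add: H_eta_def)
    show "\<bar>a_form \<omega> b1 \<epsilon> G1 G2 G3 - a_form \<omega> b1 0 G1 G2 G3\<bar> \<le> ?K * \<epsilon> * grad_norm_sq \<omega> G1 G2 G3"
      using set_integral_abs_diff_le[OF set_integrable_twisted_energy_density_0[OF H1]
          _ set_borel_measurable_twisted_energy_density[OF b1_cont H1] deviation]
        set_integrable_twisted_energy_density_0[OF H1] \<open>0 < \<epsilon>\<close> \<open>\<epsilon> < 1\<close>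
      by (simp add: a_form_eq_integral_twisted_energy_density grad_norm_sq_eq_a_form_0[of _ _ _ _ b1]
          set_integral_mult_right mult.commute mult.left_commute)
  qed
qed

end
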